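(* Let $Q=\{0,\dots,n-1\}$ and consider the transition semigroups of minimal complete DFAs with state set $Q$, initial state $0$ and empty state $n-1$ accepting suffix-free languages. For $n=6$, the transition semigroup of maximum cardinality among these is unique and equals $\mathbf{W}_{\mathrm{sf}}(6)$. For $2\le n\le 5$, the transition semigroup of maximum cardinality among these is unique and equals $\mathbf{V}_{\mathrm{sf}}(n)$.
   Context: A language $L$ is suffix-free if whenever $w\in L$ and $u\in L$ with $u$ a suffix of $w$, then $u=w$. Transformations act on the right ($qt$ is the image of $q$ under $t$). The transition semigroup of a DFA is the semigroup of transformations of its state set generated by the transformations induced by its letters. A minimal complete DFA of a suffix-free language with $n\ge2$ states has exactly one empty state (a state from which no final state is reachable), labeled $n-1$. Define $\mathbf{B}_{\mathrm{sf}}(n)=\{t:Q\to Q \mid 0\notin Qt,\ (n-1)t=n-1,\ \text{and for all } j\ge1:\ 0t^j=n-1 \text{ or } 0t^j\neq qt^j \text{ for all } 0<q<n-1\}$, $\mathbf{V}_{\mathrm{sf}}(n)=\{t\in\mathbf{B}_{\mathrm{sf}}(n)\mid \text{for all } p\neq q \text{ in } Q:\ pt=qt=n-1 \text{ or } pt\neq qt\}$, and $\mathbf{W}_{\mathrm{sf}}(n)=\{t\in\mathbf{B}_{\mathrm{sf}}(n)\mid 0t=n-1 \text{ or } qt=n-1 \text{ for all } 1\le q\le n-2\}$. *)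

theory Defs
  imports Main "HOL-Library.Sublist"
begin

text \<open>A transformation of Q = {0..<n} is represented canonically
  as a function nat => nat that maps Q into Q and fixes every q >= n.
  Transformations act on the right: applying t then s is s o t.\<close>

definition transf :: "nat \<Rightarrow> (nat \<Rightarrow> nat) set" where
  "transf n = {t. (\<forall>q<n. t q < n) \<and> (\<forall>q. n \<le> q \<longrightarrow> t q = q)}"

definition run :: "(nat \<Rightarrow> nat \<Rightarrow> nat) \<Rightarrow> nat \<Rightarrow> nat list \<Rightarrow> nat" where
  "run delta q w = foldl (\<lambda>p a. delta a p) q w"

definition is_dfa :: "nat \<Rightarrow> nat set \<Rightarrow> (nat \<Rightarrow> nat \<Rightarrow> nat) \<Rightarrow> nat set \<Rightarrow> bool" where
  "is_dfa n Sig delta F \<longleftrightarrow> 0 < n \<and> finite Sig \<and> F \<subseteq> {0..<n} \<and>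
     (\<forall>a\<in>Sig. \<forall>q<n. delta a q < n)"

definition lang :: "nat set \<Rightarrow> (nat \<Rightarrow> nat \<Rightarrow> nat) \<Rightarrow> nat set \<Rightarrow> nat list set" where
  "lang Sig delta F = {w. set w \<subseteq> Sig \<and> run delta 0 w \<in> F}"

definition is_minimal_dfa :: "nat \<Rightarrow> nat set \<Rightarrow> (nat \<Rightarrow> nat \<Rightarrow> nat) \<Rightarrow> nat set \<Rightarrow> bool" where
  "is_minimal_dfa n Sig delta F \<longleftrightarrow> is_dfa n Sig delta F \<and>
     (\<forall>q<n. \<exists>w. set w \<subseteq> Sig \<and> run delta 0 w = q) \<and>
     (\<forall>p<n. \<forall>q<n. p \<noteq> q \<longrightarrow>
        (\<exists>w. set w \<subseteq> Sig \<and> (run delta p w \<in> F \<longleftrightarrow> run delta q w \<notin> F)))"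

definition is_empty_state :: "nat set \<Rightarrow> (nat \<Rightarrow> nat \<Rightarrow> nat) \<Rightarrow> nat set \<Rightarrow> nat \<Rightarrow> bool" where
  "is_empty_state Sig delta F q \<longleftrightarrow> (\<forall>w. set w \<subseteq> Sig \<longrightarrow> run delta q w \<notin> F)"

definition suffix_free :: "'a list set \<Rightarrow> bool" where
  "suffix_free L \<longleftrightarrow> (\<forall>w\<in>L. \<forall>u\<in>L. suffix u w \<longrightarrow> u = w)"

definition word_transf :: "nat \<Rightarrow> (nat \<Rightarrow> nat \<Rightarrow> nat) \<Rightarrow> nat list \<Rightarrow> nat \<Rightarrow> nat" where
  "word_transf n delta w = (\<lambda>q. if q < n then run delta q w else q)"

definition trans_semigroup :: "nat \<Rightarrow> nat set \<Rightarrow> (nat \<Rightarrow> nat \<Rightarrow> nat) \<Rightarrow> (nat \<Rightarrow> nat) set" where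
  "trans_semigroup n Sig delta =
     {word_transf n delta w | w. w \<noteq> [] \<and> set w \<subseteq> Sig}"

definition sf_semigroups :: "nat \<Rightarrow> (nat \<Rightarrow> nat) set set" where
  "sf_semigroups n = {trans_semigroup n Sig delta | Sig delta F.
      is_minimal_dfa n Sig delta F \<and> is_empty_state Sig delta F (n - 1) \<and>
      suffix_free (lang Sig delta F)}"

definition B_sf :: "nat \<Rightarrow> (nat \<Rightarrow> nat) set" where
  "B_sf n = {t \<in> transf n. (\<forall>q<n. t q \<noteq> 0) \<and> t (n - 1) = n - 1 \<and>
      (\<forall>j\<ge>1. (t ^^ j) 0 = n - 1 \<or> (\<forall>q. 0 < q \<and> q < n - 1 \<longrightarrow> (t ^^ j) 0 \<noteq> (t ^^ j) q))}"

definition V_sf :: "nat \<Rightarrow> (nat \<Rightarrow> nat) set" where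
  "V_sf n = {t \<in> B_sf n. \<forall>p<n. \<forall>q<n. p \<noteq> q \<longrightarrow>
      (t p = n - 1 \<and> t q = n - 1) \<or> t p \<noteq> t q}"

definition W_sf :: "nat \<Rightarrow> (nat \<Rightarrow> nat) set" where
  "W_sf n = {t \<in> B_sf n. t 0 = n - 1 \<or> (\<forall>q. 1 \<le> q \<and> q \<le> n - 2 \<longrightarrow> t q = n - 1)}"

definition unique_max_card :: "'a set set \<Rightarrow> 'a set \<Rightarrow> bool" where
  "unique_max_card Fam S \<longleftrightarrow> S \<in> Fam \<and> (\<forall>T\<in>Fam. T \<noteq> S \<longrightarrow> card T < card S)"

end

theory Submission
  imports Defs
begin

text \<open>Let T be the transition semigroup of a minimal DFA of a suffix-free language, with
  empty state n-1. Suffix-freeness forbids any t in T to send 0 and a state q different from 0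
  and n-1 to a common non-empty state; applied to products s t this shows that no s in T may
  send a colliding pair (0t, qt) of T to a common non-empty state. Hence T lies inside the set
  of transformations that respect the symmetric set C of colliding pairs of T, a set that
  depends only on C, a set of pairs of middle states. For n at most 6 an exhaustive count over
  all possible C shows that this bound is uniquely largest for C empty when n = 6, where it is
  W_sf(6), and for C consisting of all pairs when n is at most 5, where it is V_sf(n). Both
  bounds are closed under composition and contain enough transformations to be realized by a
  DFA having one letter per transformation, so they are attained.\<close>

section \<open>Transition semigroups of suffix-free DFAs\<close>

lemma run_Nil [simp]: "run delta q [] = q"
  by (simp add: run_def)

lemma run_Cons [simp]: "run delta q (a # w) = run delta (delta a q) w"
  by (simp add: run_def)

lemma run_append: "run delta q (u @ v) = run delta (run delta q u) v"
  by (simp add: run_def)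

lemma run_less:
  assumes "is_dfa n Sig delta F" "q < n" "set w \<subseteq> Sig"
  shows "run delta q w < n"
  using assms(2,3) by (induction w arbitrary: q) (use assms(1) in \<open>auto simp: is_dfa_def\<close>)

lemma word_transf_apply: "q < n \<Longrightarrow> word_transf n delta w q = run delta q w"
  by (simp add: word_transf_def)

lemma word_transf_snoc:
  assumes "delta a \<in> transf n"
  shows "word_transf n delta (w @ [a]) = delta a \<circ> word_transf n delta w"
  using assms by (auto simp: word_transf_def run_append transf_def)

text \<open>The case j = 1 of the condition defining B_sf.\<close>

definition sf_admissible :: "nat \<Rightarrow> (nat \<Rightarrow> nat) \<Rightarrow> bool" where
  "sf_admissible n t \<longleftrightarrow> t \<in> transf n \<and> (\<forall>q<n. t q \<noteq> 0) \<and> t (n - 1) = n - 1 \<and>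
     (t 0 \<noteq> n - 1 \<longrightarrow> (\<forall>q. 0 < q \<and> q < n - 1 \<longrightarrow> t 0 \<noteq> t q))"

lemma sf_admissible_less: "sf_admissible n t \<Longrightarrow> q < n \<Longrightarrow> t q < n"
  by (simp add: sf_admissible_def transf_def)

lemma sf_admissible_if_B_sf:
  assumes "t \<in> B_sf n"
  shows "sf_admissible n t"
proof -
  have "(t ^^ 1) 0 = n - 1 \<or> (\<forall>q. 0 < q \<and> q < n - 1 \<longrightarrow> (t ^^ 1) 0 \<noteq> (t ^^ 1) q)"
    using assms unfolding B_sf_def by blast
  then show ?thesis
    using assms by (auto simp: B_sf_def sf_admissible_def)
qed

lemma B_sf_if_closed:
  assumes adm: "\<forall>s\<in>S. sf_admissible n s" and closed: "\<forall>s\<in>S. \<forall>r\<in>S. s \<circ> r \<in> S"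
    and t: "t \<in> S"
  shows "t \<in> B_sf n"
proof -
  have powers: "t ^^ Suc j \<in> S" for j
  proof (induction j)
    case (Suc j)
    then show ?case
      using closed t by (metis funpow.simps(2))
  qed (use t in simp)
  have "(t ^^ j) 0 = n - 1 \<or> (\<forall>q. 0 < q \<and> q < n - 1 \<longrightarrow> (t ^^ j) 0 \<noteq> (t ^^ j) q)"
    if "j \<ge> 1" for j
    using that adm powers[of "j - 1"] by (auto simp: sf_admissible_def)
  then show ?thesis
    using adm t by (auto simp: B_sf_def sf_admissible_def)
qed

locale sf_dfa =
  fixes n Sig delta F
  assumes two_le_n: "2 \<le> n"
    and minimal: "is_minimal_dfa n Sig delta F"
    and empty_state: "is_empty_state Sig delta F (n - 1)"
    and suffix_free: "suffix_free (lang Sig delta F)"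
begin

lemma run_less_states: "q < n \<Longrightarrow> set w \<subseteq> Sig \<Longrightarrow> run delta q w < n"
  using minimal run_less unfolding is_minimal_dfa_def by blast

lemma reachable: "q < n \<Longrightarrow> \<exists>u. set u \<subseteq> Sig \<and> run delta 0 u = q"
  using minimal by (simp add: is_minimal_dfa_def)

lemma distinguishable:
  "p < n \<Longrightarrow> q < n \<Longrightarrow> p \<noteq> q \<Longrightarrow>
     \<exists>v. set v \<subseteq> Sig \<and> (run delta p v \<in> F \<longleftrightarrow> run delta q v \<notin> F)"
  using minimal by (simp add: is_minimal_dfa_def)

lemma nonempty_state:
  assumes "q < n" "q \<noteq> n - 1"
  shows "\<exists>v. set v \<subseteq> Sig \<and> run delta q v \<in> F"
proof -
  obtain v where "set v \<subseteq> Sig" "run delta q v \<in> F \<longleftrightarrow> run delta (n - 1) v \<notin> F"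
    using distinguishable[of q "n - 1"] assms two_le_n by auto
  then show ?thesis
    using empty_state unfolding is_empty_state_def by blast
qed

lemma run_empty_state:
  assumes "set w \<subseteq> Sig"
  shows "run delta (n - 1) w = n - 1"
proof (rule ccontr)
  let ?r = "run delta (n - 1) w"
  assume "?r \<noteq> n - 1"
  moreover have "?r < n"
    using run_less_states assms two_le_n by simp
  ultimately obtain v where "set v \<subseteq> Sig" "run delta ?r v \<in> F"
    using nonempty_state by blast
  then show False
    using empty_state assms unfolding is_empty_state_def by (metis run_append set_append le_sup_iff)
qed

lemma accepted_suffix_eq:
  assumes "set u \<subseteq> Sig" "set v \<subseteq> Sig" "run delta 0 v \<in> F" "run delta 0 (u @ v) \<in> F"
  shows "u = []"
proof -
  have "v \<in> lang Sig delta F" "u @ v \<in> lang Sig delta F"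
    using assms by (auto simp: lang_def)
  moreover have "suffix v (u @ v)"
    by (simp add: suffix_def)
  ultimately show ?thesis
    using suffix_free by (auto simp: suffix_free_def)
qed

lemma run_ne_zero:
  assumes "q < n" "set w \<subseteq> Sig" "w \<noteq> []"
  shows "run delta q w \<noteq> 0"
proof
  assume "run delta q w = 0"
  obtain u where "set u \<subseteq> Sig" "run delta 0 u = q"
    using reachable assms(1) by blast
  moreover obtain v where "set v \<subseteq> Sig" "run delta 0 v \<in> F"
    using nonempty_state[of 0] two_le_n by auto
  ultimately show False
    using accepted_suffix_eq[of "u @ w" v] assms \<open>run delta q w = 0\<close> by (auto simp: run_append)
qed

text \<open>If x led both 0 and a reachable state q \<noteq> 0 to a non-empty state, then x v and u x v
  would both be accepted for a word u leading to q.\<close>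

lemma run_collide_empty:
  assumes "q < n" "q \<noteq> 0" "set x \<subseteq> Sig" "run delta 0 x = run delta q x"
  shows "run delta 0 x = n - 1"
proof (rule ccontr)
  let ?r = "run delta 0 x"
  assume "?r \<noteq> n - 1"
  moreover have "?r < n"
    using run_less_states assms(3) two_le_n by simp
  ultimately obtain v where v: "set v \<subseteq> Sig" "run delta ?r v \<in> F"
    using nonempty_state by blast
  obtain u where u: "set u \<subseteq> Sig" "run delta 0 u = q"
    using reachable assms(1) by blast
  have "run delta 0 (u @ x @ v) = run delta ?r v"
    using u(2) assms(4) by (simp only: run_append)
  then have "u = []"
    using accepted_suffix_eq[of u "x @ v"] u(1) v assms(3) by (simp add: run_append)
  with u assms(2) show False
    by simp
qed

lemma sf_admissible_trans_semigroup:
  assumes "t \<in> trans_semigroup n Sig delta"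
  shows "sf_admissible n t"
proof -
  obtain w where w: "t = word_transf n delta w" "w \<noteq> []" "set w \<subseteq> Sig"
    using assms by (auto simp: trans_semigroup_def)
  have t_run: "q < n \<Longrightarrow> t q = run delta q w" for q
    using w by (simp add: word_transf_apply)
  have "t \<in> transf n"
    using w run_less_states by (auto simp: transf_def word_transf_def)
  moreover have "\<forall>q<n. t q \<noteq> 0"
    using t_run run_ne_zero w(2,3) by simp
  moreover have "t (n - 1) = n - 1"
    using t_run run_empty_state w(3) two_le_n by simp
  moreover have "t 0 = n - 1" if "t 0 = t q" "0 < q" "q < n - 1" for q
    using run_collide_empty[of q w] that w(3) t_run[of 0] t_run[of q] by simp
  ultimately show ?thesis
    unfolding sf_admissible_def by blast
qed

lemma trans_semigroup_no_focus:
  assumes "t \<in> trans_semigroup n Sig delta" "s \<in> trans_semigroup n Sig delta"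
    and "0 < q" "q < n" "s (t 0) = s (t q)"
  shows "s (t 0) = n - 1"
proof -
  obtain w where w: "t = word_transf n delta w" "set w \<subseteq> Sig"
    using assms(1) by (auto simp: trans_semigroup_def)
  obtain x where x: "s = word_transf n delta x" "set x \<subseteq> Sig"
    using assms(2) by (auto simp: trans_semigroup_def)
  have "s (t p) = run delta p (w @ x)" if "p < n" for p
    using that w x run_less_states by (simp add: word_transf_apply run_append)
  then show ?thesis
    using run_collide_empty[of q "w @ x"] assms(3-5) w x by simp
qed

end

section \<open>The bound given by the colliding pairs\<close>

text \<open>C stands for a symmetric set of colliding pairs: t must not map a pair of C to a common
  non-empty state, and every pair (0t, qt) made colliding by t must lie in C.\<close>

definition compatible :: "nat \<Rightarrow> (nat \<times> nat) set \<Rightarrow> (nat \<Rightarrow> nat) \<Rightarrow> bool" where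
  "compatible n C t \<longleftrightarrow> (\<forall>(p, q)\<in>C. t p = t q \<longrightarrow> t p = n - 1) \<and>
     (t 0 \<noteq> n - 1 \<longrightarrow> (\<forall>q. 0 < q \<and> q < n - 1 \<and> t q \<noteq> n - 1 \<longrightarrow> (t 0, t q) \<in> C))"

definition compatible_set :: "nat \<Rightarrow> (nat \<times> nat) set \<Rightarrow> (nat \<Rightarrow> nat) set" where
  "compatible_set n C = {t. sf_admissible n t \<and> compatible n C t}"

definition sym_set :: "('a \<times> 'a) list \<Rightarrow> ('a \<times> 'a) set" where
  "sym_set xs = set xs \<union> (set xs)\<inverse>"

definition middle_pairs :: "nat \<Rightarrow> (nat \<times> nat) list" where
  "middle_pairs n = concat (map (\<lambda>p. map (Pair p) [Suc p..<n - 1]) [1..<n - 1])"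

lemma set_middle_pairs: "set (middle_pairs n) = {(p, q). 0 < p \<and> p < q \<and> q < n - 1}"
  by (auto simp: middle_pairs_def image_iff)

lemma set_subseqs_middle_pairs:
  "xs \<in> set (subseqs (middle_pairs n)) \<Longrightarrow> set xs \<subseteq> set (middle_pairs n)"
  by (auto elim: list_emb_set)

lemma subset_compatible_set_collisions:
  assumes adm: "\<forall>t\<in>T. sf_admissible n t"
    and no_focus: "\<And>t s q. t \<in> T \<Longrightarrow> s \<in> T \<Longrightarrow> 0 < q \<Longrightarrow> q < n - 1 \<Longrightarrow>
      s (t 0) = s (t q) \<Longrightarrow> s (t 0) = n - 1"
  obtains xs where "xs \<in> set (subseqs (middle_pairs n))" "T \<subseteq> compatible_set n (sym_set xs)"
proof -
  define C where
    "C = {(t 0, t q) | t q. t \<in> T \<and> 0 < q \<and> q < n - 1 \<and> t 0 \<noteq> n - 1 \<and> t q \<noteq> n - 1}"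
  define xs where "xs = filter (\<lambda>(p, q). (p, q) \<in> C \<or> (q, p) \<in> C) (middle_pairs n)"
  have C_middle: "0 < p \<and> p < n - 1 \<and> 0 < q \<and> q < n - 1 \<and> p \<noteq> q" if pq: "(p, q) \<in> C" for p q
  proof -
    obtain t :: "nat \<Rightarrow> nat" and r where t: "t \<in> T" "0 < r" "r < n - 1" "t 0 \<noteq> n - 1"
      "t r \<noteq> n - 1" "p = t 0" "q = t r"
      using pq unfolding C_def by fastforce
    then have "sf_admissible n t"
      using adm by blast
    moreover have "t 0 < n" "t r < n"
      using t sf_admissible_less[OF \<open>sf_admissible n t\<close>] by simp_all
    ultimately show ?thesis
      using t by (auto simp: sf_admissible_def)
  qed
  have C_sub: "C \<subseteq> sym_set xs"
  proof
    fix c assume "c \<in> C"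
    moreover obtain p q where "c = (p, q)"
      by fastforce
    ultimately show "c \<in> sym_set xs"
      using C_middle[of p q] by (cases "p < q") (auto simp: sym_set_def xs_def set_middle_pairs)
  qed
  have sub_C: "sym_set xs \<subseteq> C \<union> C\<inverse>"
    by (auto simp: sym_set_def xs_def)
  have "s \<in> compatible_set n (sym_set xs)" if s: "s \<in> T" for s
  proof -
    have focus: "s a = n - 1" if ab: "(a, b) \<in> C" "s a = s b" for a b
    proof -
      obtain t :: "nat \<Rightarrow> nat" and r where "t \<in> T" "0 < r" "r < n - 1" "a = t 0" "b = t r"
        using ab(1) unfolding C_def by fastforce
      then show ?thesis
        using no_focus[of t s r] s ab(2) by blast
    qed
    have "s p = n - 1" if "(p, q) \<in> sym_set xs" "s p = s q" for p q
      using that sub_C focus[of p q] focus[of q p] by auto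
    moreover have "(s 0, s q) \<in> sym_set xs"
      if "s 0 \<noteq> n - 1" "0 < q" "q < n - 1" "s q \<noteq> n - 1" for q
      using that s C_sub unfolding C_def by blast
    ultimately show ?thesis
      using adm s unfolding compatible_set_def compatible_def by blast
  qed
  then show ?thesis
    using that[of xs] by (auto simp: xs_def)
qed

section \<open>Counting the bounds\<close>

fun count_lists :: "('a list \<Rightarrow> bool) \<Rightarrow> 'a list \<Rightarrow> nat \<Rightarrow> 'a list \<Rightarrow> nat" where
  "count_lists P vs 0 suf = (if P suf then 1 else 0)"
| "count_lists P vs (Suc k) suf = sum_list (map (\<lambda>v. count_lists P vs k (v # suf)) vs)"

lemma count_lists_eq_card:
  assumes "distinct vs"
  shows "count_lists P vs k suf = card {l. length l = k \<and> set l \<subseteq> set vs \<and> P (l @ suf)}"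
proof (induction k arbitrary: suf)
  case 0
  have "{l. length l = 0 \<and> set l \<subseteq> set vs \<and> P (l @ suf)} = (if P suf then {[]} else {})"
    by auto
  then show ?case
    by simp
next
  case (Suc k)
  let ?A = "\<lambda>v. {l. length l = k \<and> set l \<subseteq> set vs \<and> P (l @ v # suf)}"
  have split_last: "{l. length l = Suc k \<and> set l \<subseteq> set vs \<and> P (l @ suf)} =
      (\<Union>v\<in>set vs. (\<lambda>l. l @ [v]) ` ?A v)"
    by (auto simp: length_Suc_conv_rev)
  have "finite (?A v)" for v
    by (rule finite_subset[OF _ finite_lists_length_eq[OF finite_set, of vs k]]) auto
  then have "card (\<Union>v\<in>set vs. (\<lambda>l. l @ [v]) ` ?A v) = (\<Sum>v\<in>set vs. card ((\<lambda>l. l @ [v]) ` ?A v))"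
    by (intro card_UN_disjoint) auto
  also have "\<dots> = (\<Sum>v\<in>set vs. card (?A v))"
    by (intro sum.cong) (auto intro!: card_image inj_onI)
  also have "\<dots> = sum_list (map (\<lambda>v. card (?A v)) vs)"
    using assms by (simp add: sum.distinct_set_conv_list)
  finally show ?case
    using Suc split_last by simp
qed

text \<open>A transformation fixing n-1 and avoiding 0 is encoded by the list of images of
  0, ..., n-2, which turns the bounds into finite sets of lists that can be counted by evaluation.\<close>

definition list_transf :: "nat \<Rightarrow> nat list \<Rightarrow> nat \<Rightarrow> nat" where
  "list_transf n l q = (if q < n then l ! q else q)"

definition compatible_list :: "nat \<Rightarrow> (nat \<times> nat) list \<Rightarrow> nat list \<Rightarrow> bool" where
  "compatible_list n xs l \<longleftrightarrow>
     (l ! 0 \<noteq> n - 1 \<longrightarrow> list_all (\<lambda>q. l ! 0 \<noteq> l ! q \<and>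
       (l ! q \<noteq> n - 1 \<longrightarrow> (l ! 0, l ! q) \<in> set xs \<or> (l ! q, l ! 0) \<in> set xs)) [1..<n - 1]) \<and>
     list_all (\<lambda>(p, q). l ! p = l ! q \<longrightarrow> l ! p = n - 1) xs"

lemma list_transf_compatible_iff:
  assumes l: "length l = n" "set l \<subseteq> {1..<n}" "l ! (n - 1) = n - 1" and "2 \<le> n"
    and xs: "set xs \<subseteq> set (middle_pairs n)"
  shows "list_transf n l \<in> compatible_set n (sym_set xs) \<longleftrightarrow> compatible_list n xs l"
proof -
  let ?t = "list_transf n l"
  have nth0: "?t 0 = l ! 0" and nth: "q < n - 1 \<Longrightarrow> ?t q = l ! q" for q
    using \<open>2 \<le> n\<close> by (auto simp: list_transf_def)
  have range: "0 < l ! q \<and> l ! q < n" if "q < n" for q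
    using that l nth_mem[of q l] by fastforce
  have base: "?t \<in> transf n \<and> (\<forall>q<n. ?t q \<noteq> 0) \<and> ?t (n - 1) = n - 1"
    using range l(3) \<open>2 \<le> n\<close> by (auto simp: transf_def list_transf_def)
  have pairs: "p < n - 1 \<and> q < n - 1" if "(p, q) \<in> set xs" for p q
    using that xs by (auto simp: set_middle_pairs)
  have "(\<forall>(p, q)\<in>sym_set xs. ?t p = ?t q \<longrightarrow> ?t p = n - 1) \<longleftrightarrow>
      (\<forall>(p, q)\<in>set xs. ?t p = ?t q \<longrightarrow> ?t p = n - 1)"
    by (auto simp: sym_set_def)
  also have "\<dots> \<longleftrightarrow> (\<forall>(p, q)\<in>set xs. l ! p = l ! q \<longrightarrow> l ! p = n - 1)"
    using pairs by (intro ball_cong) (auto simp: nth)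
  also have "\<dots> \<longleftrightarrow> list_all (\<lambda>(p, q). l ! p = l ! q \<longrightarrow> l ! p = n - 1) xs"
    by (simp only: list_all_iff)
  finally have focus: "(\<forall>(p, q)\<in>sym_set xs. ?t p = ?t q \<longrightarrow> ?t p = n - 1) \<longleftrightarrow>
      list_all (\<lambda>(p, q). l ! p = l ! q \<longrightarrow> l ! p = n - 1) xs" .
  have collide: "(?t 0 \<noteq> n - 1 \<longrightarrow> (\<forall>q. 0 < q \<and> q < n - 1 \<longrightarrow> ?t 0 \<noteq> ?t q)) \<and>
      (?t 0 \<noteq> n - 1 \<longrightarrow> (\<forall>q. 0 < q \<and> q < n - 1 \<and> ?t q \<noteq> n - 1 \<longrightarrow> (?t 0, ?t q) \<in> sym_set xs))
      \<longleftrightarrow> (l ! 0 \<noteq> n - 1 \<longrightarrow> list_all (\<lambda>q. l ! 0 \<noteq> l ! q \<and>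
       (l ! q \<noteq> n - 1 \<longrightarrow> (l ! 0, l ! q) \<in> set xs \<or> (l ! q, l ! 0) \<in> set xs)) [1..<n - 1])"
    by (auto simp: nth0 nth Suc_le_eq list_all_iff sym_set_def)
  show ?thesis
    unfolding compatible_set_def compatible_def sf_admissible_def compatible_list_def
    using base focus collide by blast
qed

lemma compatible_set_eq_image:
  assumes "2 \<le> n" "set xs \<subseteq> set (middle_pairs n)"
  shows "compatible_set n (sym_set xs) = (\<lambda>l. list_transf n (l @ [n - 1])) `
    {l. length l = n - 1 \<and> set l \<subseteq> set [1..<n] \<and> compatible_list n xs (l @ [n - 1])}"
    (is "_ = ?f ` ?L")
proof
  show "compatible_set n (sym_set xs) \<subseteq> ?f ` ?L"
  proof
    fix t assume t: "t \<in> compatible_set n (sym_set xs)"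
    then have adm: "sf_admissible n t"
      by (simp add: compatible_set_def)
    let ?l = "map t [0..<n - 1]"
    have t_eq: "?f ?l = t"
    proof
      fix q
      show "?f ?l q = t q"
        using adm \<open>2 \<le> n\<close> by (cases "q < n - 1"; cases "q = n - 1")
          (auto simp: list_transf_def nth_append sf_admissible_def transf_def)
    qed
    have "set (?l @ [n - 1]) \<subseteq> {1..<n}"
      using adm \<open>2 \<le> n\<close> sf_admissible_less[OF adm] by (auto simp: sf_admissible_def Suc_le_eq)
    then have "compatible_list n xs (?l @ [n - 1])"
      using list_transf_compatible_iff[of "?l @ [n - 1]" n xs] assms t t_eq by (simp add: nth_append)
    moreover have "set ?l \<subseteq> set [1..<n]"
      using \<open>set (?l @ [n - 1]) \<subseteq> {1..<n}\<close> by auto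
    ultimately show "t \<in> ?f ` ?L"
      using t_eq by (intro image_eqI[of _ _ ?l]) auto
  qed
  show "?f ` ?L \<subseteq> compatible_set n (sym_set xs)"
    using list_transf_compatible_iff assms by (auto simp: nth_append)
qed

lemma inj_on_list_transf_snoc: "inj_on (\<lambda>l. list_transf n (l @ [x])) {l. length l = n - 1}"
proof (rule inj_onI)
  fix l1 l2
  assume l: "l1 \<in> {l. length l = n - 1}" "l2 \<in> {l. length l = n - 1}"
    and eq: "list_transf n (l1 @ [x]) = list_transf n (l2 @ [x])"
  show "l1 = l2"
  proof (rule nth_equalityI)
    fix i assume "i < length l1"
    then show "l1 ! i = l2 ! i"
      using l fun_cong[OF eq, of i] by (auto simp: list_transf_def nth_append split: if_splits)
  qed (use l in simp)
qed

definition num_compatible :: "nat \<Rightarrow> (nat \<times> nat) list \<Rightarrow> nat" where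
  "num_compatible n xs = count_lists (compatible_list n xs) [1..<n] (n - 1) [n - 1]"

lemma
  assumes "2 \<le> n" "set xs \<subseteq> set (middle_pairs n)"
  shows finite_compatible_set: "finite (compatible_set n (sym_set xs))"
    and card_compatible_set: "card (compatible_set n (sym_set xs)) = num_compatible n xs"
proof -
  let ?L = "{l. length l = n - 1 \<and> set l \<subseteq> set [1..<n] \<and> compatible_list n xs (l @ [n - 1])}"
  have "finite ?L"
    by (rule finite_subset[OF _ finite_lists_length_eq[OF finite_set, of "[1..<n]" "n - 1"]]) auto
  then show "finite (compatible_set n (sym_set xs))"
    using compatible_set_eq_image[OF assms] by simp
  have "card (compatible_set n (sym_set xs)) = card ?L"
    unfolding compatible_set_eq_image[OF assms]
    by (rule card_image, rule inj_on_subset[OF inj_on_list_transf_snoc]) auto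
  also have "\<dots> = num_compatible n xs"
    by (simp add: num_compatible_def count_lists_eq_card)
  finally show "card (compatible_set n (sym_set xs)) = num_compatible n xs" .
qed

lemma sf_semigroup_subset_compatible_set:
  assumes "T \<in> sf_semigroups n" "2 \<le> n"
  obtains xs where "xs \<in> set (subseqs (middle_pairs n))" "T \<subseteq> compatible_set n (sym_set xs)"
proof -
  obtain Sig delta F where T: "T = trans_semigroup n Sig delta"
    and "is_minimal_dfa n Sig delta F" "is_empty_state Sig delta F (n - 1)"
      "suffix_free (lang Sig delta F)"
    using assms(1) unfolding sf_semigroups_def by blast
  then interpret sf_dfa n Sig delta F
    using assms(2) by unfold_locales
  show ?thesis
    using subset_compatible_set_collisions[of T n] that T
      sf_admissible_trans_semigroup trans_semigroup_no_focus by fastforce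
qed

lemma unique_max_card_compatible_set:
  assumes n: "2 \<le> n" and xs0: "set xs0 \<subseteq> set (middle_pairs n)"
    and mem: "compatible_set n (sym_set xs0) \<in> sf_semigroups n"
    and max: "list_all (\<lambda>xs. xs = xs0 \<or> num_compatible n xs < num_compatible n xs0)
      (subseqs (middle_pairs n))"
  shows "unique_max_card (sf_semigroups n) (compatible_set n (sym_set xs0))"
  unfolding unique_max_card_def
proof (intro conjI ballI impI mem)
  fix T assume T: "T \<in> sf_semigroups n" and ne: "T \<noteq> compatible_set n (sym_set xs0)"
  obtain xs where xs: "xs \<in> set (subseqs (middle_pairs n))" "T \<subseteq> compatible_set n (sym_set xs)"
    using sf_semigroup_subset_compatible_set[OF T n] by blast
  show "card T < card (compatible_set n (sym_set xs0))"
  proof (cases "xs = xs0")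
    case True
    with xs(2) ne have "T \<subset> compatible_set n (sym_set xs0)"
      by blast
    then show ?thesis
      using finite_compatible_set[OF n xs0] by (rule psubset_card_mono[rotated])
  next
    case False
    have xs_middle: "set xs \<subseteq> set (middle_pairs n)"
      using set_subseqs_middle_pairs[OF xs(1)] .
    have "card T \<le> card (compatible_set n (sym_set xs))"
      using xs(2) finite_compatible_set[OF n xs_middle] by (rule card_mono[rotated])
    also have "\<dots> < card (compatible_set n (sym_set xs0))"
      using max xs(1) False unfolding card_compatible_set[OF n xs_middle]
        card_compatible_set[OF n xs0] list_all_iff by blast
    finally show ?thesis .
  qed
qed

section \<open>The semigroups W_sf and V_sf\<close>

lemma sf_admissible_comp:
  assumes "sf_admissible n s" "sf_admissible n t"
  shows "s \<circ> t \<in> transf n" "\<forall>q<n. (s \<circ> t) q \<noteq> 0" "(s \<circ> t) (n - 1) = n - 1"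
  using assms by (auto simp: sf_admissible_def transf_def)

lemma compatible_set_empty_comp:
  assumes "s \<in> compatible_set n {}" "t \<in> compatible_set n {}"
  shows "s \<circ> t \<in> compatible_set n {}"
proof -
  have adm: "sf_admissible n s" "sf_admissible n t"
    using assms by (simp_all add: compatible_set_def)
  have "s (t q) = n - 1" if "s (t 0) \<noteq> n - 1" "0 < q" "q < n - 1" for q
  proof -
    have "t 0 \<noteq> n - 1"
      using that(1) adm(1) by (auto simp: sf_admissible_def)
    then have "t q = n - 1"
      using assms(2) that(2,3) by (auto simp: compatible_set_def compatible_def)
    then show ?thesis
      using adm(1) by (simp add: sf_admissible_def)
  qed
  then show ?thesis
    using sf_admissible_comp[OF adm]
    by (auto simp: compatible_set_def compatible_def sf_admissible_def)
qed

lemma W_sf_eq_compatible_set: "W_sf n = compatible_set n {}"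
proof
  show "W_sf n \<subseteq> compatible_set n {}"
    by (auto simp: W_sf_def compatible_set_def compatible_def Suc_le_eq
        dest: sf_admissible_if_B_sf)
  show "compatible_set n {} \<subseteq> W_sf n"
  proof
    fix t assume t: "t \<in> compatible_set n {}"
    have "t \<in> B_sf n"
      using B_sf_if_closed[of "compatible_set n {}"] t compatible_set_empty_comp
      by (auto simp: compatible_set_def)
    moreover have "t q = n - 1" if "t 0 \<noteq> n - 1" "1 \<le> q" "q \<le> n - 2" for q
    proof -
      have "q < n - 1"
        using that(2,3) by linarith
      with t that(1,2) show ?thesis
        by (auto simp: compatible_set_def compatible_def)
    qed
    ultimately show "t \<in> W_sf n"
      by (auto simp: W_sf_def)
  qed
qed

definition inj_except_empty :: "nat \<Rightarrow> (nat \<Rightarrow> nat) set" where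
  "inj_except_empty n = {t \<in> transf n. (\<forall>q<n. t q \<noteq> 0) \<and> t (n - 1) = n - 1 \<and>
     (\<forall>p<n. \<forall>q<n. t p = t q \<longrightarrow> p = q \<or> t p = n - 1)}"

lemma inj_except_empty_comp:
  assumes "s \<in> inj_except_empty n" "t \<in> inj_except_empty n"
  shows "s \<circ> t \<in> inj_except_empty n"
proof -
  have s: "s \<in> transf n" "\<forall>q<n. s q \<noteq> 0" "s (n - 1) = n - 1"
    and s_inj: "\<And>p q. p < n \<Longrightarrow> q < n \<Longrightarrow> s p = s q \<Longrightarrow> p = q \<or> s p = n - 1"
    using assms(1) by (auto simp: inj_except_empty_def)
  have t: "t \<in> transf n" "t (n - 1) = n - 1"
    and t_inj: "\<And>p q. p < n \<Longrightarrow> q < n \<Longrightarrow> t p = t q \<Longrightarrow> p = q \<or> t p = n - 1"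
    using assms(2) by (auto simp: inj_except_empty_def)
  have t_less: "t q < n" if "q < n" for q
    using t(1) that by (simp add: transf_def)
  have "p = q \<or> s (t p) = n - 1" if "p < n" "q < n" "s (t p) = s (t q)" for p q
    using s_inj[OF t_less t_less, OF that] t_inj[OF that(1,2)] s(3) by auto
  then show ?thesis
    using s t t_less by (auto simp: inj_except_empty_def transf_def)
qed

lemma inj_except_empty_iff:
  fixes t :: "nat \<Rightarrow> nat"
  assumes "t (n - 1) = n - 1"
  shows "(\<forall>p<n. \<forall>q<n. t p = t q \<longrightarrow> p = q \<or> t p = n - 1) \<longleftrightarrow>
    (t 0 \<noteq> n - 1 \<longrightarrow> (\<forall>q. 0 < q \<and> q < n - 1 \<longrightarrow> t 0 \<noteq> t q)) \<and>
    (\<forall>p q. 0 < p \<and> p < n - 1 \<and> 0 < q \<and> q < n - 1 \<and> p \<noteq> q \<longrightarrow> t p = t q \<longrightarrow> t p = n - 1)"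
    (is "?inj \<longleftrightarrow> ?zero \<and> ?middle")
proof
  assume inj: ?inj
  have "t 0 \<noteq> t q" if q: "t 0 \<noteq> n - 1" "0 < q" "q < n - 1" for q
  proof -
    have "0 < n" "q < n"
      using q(2,3) by linarith+
    with inj q show ?thesis
      by blast
  qed
  moreover have "t p = n - 1" if pq: "p < n - 1" "q < n - 1" "p \<noteq> q" "t p = t q" for p q
  proof -
    have "p < n" "q < n"
      using pq(1,2) by linarith+
    with inj pq(3,4) show ?thesis
      by blast
  qed
  ultimately show "?zero \<and> ?middle"
    by blast
next
  assume "?zero \<and> ?middle"
  then have zero: ?zero and middle: ?middle
    by blast+
  have "t p = n - 1" if pq: "p < n" "q < n" "p \<noteq> q" "t p = t q" for p q
  proof (cases "p = n - 1 \<or> q = n - 1")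
    case True
    then show ?thesis
      using assms pq(4) by auto
  next
    case False
    then have "p < n - 1" "q < n - 1"
      using pq(1,2) by linarith+
    then show ?thesis
      using zero middle pq(3,4) by (cases "p = 0 \<or> q = 0"; cases "t 0 = n - 1") auto
  qed
  then show ?inj
    by blast
qed

lemma compatible_set_middle_pairs:
  assumes "2 \<le> n"
  shows "compatible_set n (sym_set (middle_pairs n)) = inj_except_empty n"
proof -
  have sym: "(p, q) \<in> sym_set (middle_pairs n) \<longleftrightarrow>
      0 < p \<and> p < n - 1 \<and> 0 < q \<and> q < n - 1 \<and> p \<noteq> q" for p q
    by (auto simp: sym_set_def set_middle_pairs)
  have "sf_admissible n t \<and> compatible n (sym_set (middle_pairs n)) t \<longleftrightarrow> t \<in> inj_except_empty n"
    if base: "t \<in> transf n" "\<forall>q<n. t q \<noteq> 0" "t (n - 1) = n - 1" for t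
  proof -
    have middle: "0 < t q \<and> t q < n - 1" if "t q \<noteq> n - 1" "q < n - 1" for q
    proof -
      have "q < n"
        using that(2) by linarith
      with base that(1) show ?thesis
        by (auto simp: transf_def)
    qed
    let ?zero = "t 0 \<noteq> n - 1 \<longrightarrow> (\<forall>q. 0 < q \<and> q < n - 1 \<longrightarrow> t 0 \<noteq> t q)"
    let ?middle = "\<forall>p q. 0 < p \<and> p < n - 1 \<and> 0 < q \<and> q < n - 1 \<and> p \<noteq> q \<longrightarrow>
      t p = t q \<longrightarrow> t p = n - 1"
    let ?collide = "t 0 \<noteq> n - 1 \<longrightarrow>
      (\<forall>q. 0 < q \<and> q < n - 1 \<and> t q \<noteq> n - 1 \<longrightarrow> (t 0, t q) \<in> sym_set (middle_pairs n))"
    have "sf_admissible n t \<longleftrightarrow> ?zero"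
      using base by (simp add: sf_admissible_def)
    moreover have "compatible n (sym_set (middle_pairs n)) t \<longleftrightarrow> ?middle \<and> ?collide"
      unfolding compatible_def by (auto simp: sym)
    moreover have "t \<in> inj_except_empty n \<longleftrightarrow> ?zero \<and> ?middle"
      using base inj_except_empty_iff[of t n] by (simp add: inj_except_empty_def)
    moreover have ?collide if ?zero
      using that middle[of 0] middle assms by (auto simp: sym)
    ultimately show ?thesis
      by blast
  qed
  then show ?thesis
    by (auto simp: compatible_set_def sf_admissible_def inj_except_empty_def)
qed

lemma V_sf_eq_compatible_set:
  assumes "2 \<le> n"
  shows "V_sf n = compatible_set n (sym_set (middle_pairs n))"
proof -
  have "V_sf n = inj_except_empty n"
  proof
    show "V_sf n \<subseteq> inj_except_empty n"
      by (auto simp: V_sf_def B_sf_def inj_except_empty_def)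
    show "inj_except_empty n \<subseteq> V_sf n"
    proof
      fix t assume t: "t \<in> inj_except_empty n"
      have "\<forall>s\<in>inj_except_empty n. sf_admissible n s"
        unfolding compatible_set_middle_pairs[OF assms, symmetric] by (simp add: compatible_set_def)
      then have "t \<in> B_sf n"
        using B_sf_if_closed[of "inj_except_empty n"] t inj_except_empty_comp by blast
      moreover have "(t p = n - 1 \<and> t q = n - 1) \<or> t p \<noteq> t q" if "p < n" "q < n" "p \<noteq> q" for p q
      proof -
        have "t p = t q \<longrightarrow> p = q \<or> t p = n - 1"
          using t that(1,2) by (simp add: inj_except_empty_def)
        with that(3) show ?thesis
          by auto
      qed
      ultimately show "t \<in> V_sf n"
        by (simp add: V_sf_def)
    qed
  qed
  then show ?thesis
    using compatible_set_middle_pairs[OF assms] by simp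
qed

section \<open>Realization by DFAs\<close>

definition point_transf :: "nat \<Rightarrow> nat \<Rightarrow> nat \<Rightarrow> nat \<Rightarrow> nat" where
  "point_transf n p r q = (if q = p then r else if q < n then n - 1 else q)"

lemma point_transf_compatible_set_empty:
  assumes "p < n - 1" "0 < r" "r < n"
  shows "point_transf n p r \<in> compatible_set n {}"
  using assms by (auto simp: compatible_set_def compatible_def sf_admissible_def transf_def
      point_transf_def)

lemma point_transf_inj_except_empty:
  assumes "p < n - 1" "0 < r" "r < n"
  shows "point_transf n p r \<in> inj_except_empty n"
  using assms by (auto simp: inj_except_empty_def transf_def point_transf_def)

lemma trans_semigroup_eq:
  assumes delta: "delta ` Sig = A" and A: "A \<subseteq> transf n" and closed: "\<forall>s\<in>A. \<forall>t\<in>A. s \<circ> t \<in> A"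
  shows "trans_semigroup n Sig delta = A"
proof -
  have letter: "word_transf n delta [a] = delta a" if "a \<in> Sig" for a
    unfolding word_transf_def using delta A that by (intro ext) (auto simp: transf_def)
  have "word_transf n delta w \<in> A" if "w \<noteq> []" "set w \<subseteq> Sig" for w
    using that
  proof (induction w rule: rev_induct)
    case (snoc a w)
    then have "delta a \<in> A"
      using delta by auto
    then show ?case
      using snoc letter closed A word_transf_snoc[of delta a n w] by (cases "w = []") auto
  qed simp
  moreover have "delta a \<in> trans_semigroup n Sig delta" if "a \<in> Sig" for a
    unfolding trans_semigroup_def using letter[OF that] that by (auto intro!: exI[of _ "[a]"])
  ultimately show ?thesis
    using delta by (auto simp: trans_semigroup_def)
qed

lemma minimal_dfa_if_point_letters:
  assumes n: "2 \<le> n" and "finite Sig" and letters: "\<forall>a\<in>Sig. \<forall>q<n. delta a q < n"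
    and points: "\<And>p r. p < n - 1 \<Longrightarrow> 0 < r \<Longrightarrow> r < n \<Longrightarrow>
      \<exists>a\<in>Sig. \<forall>q<n. delta a q = point_transf n p r q"
  shows "is_minimal_dfa n Sig delta {n - 2}"
proof -
  have reach: "\<exists>w. set w \<subseteq> Sig \<and> run delta 0 w = q" if q: "q < n" for q
  proof (cases "q = 0")
    case False
    then obtain a where "a \<in> Sig" "delta a 0 = q"
      using points[of 0 q] q n by (auto simp: point_transf_def)
    then show ?thesis
      by (intro exI[of _ "[a]"]) simp
  qed (intro exI[of _ "[]"], simp)
  have separate: "\<exists>w. set w \<subseteq> Sig \<and> run delta p w \<in> {n - 2} \<and> run delta q w \<notin> {n - 2}"
    if pq: "p < n - 1" "q < n" "p \<noteq> q" for p q
  proof (cases "p = n - 2")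
    case False
    then obtain a where "a \<in> Sig" "\<forall>r<n. delta a r = point_transf n p (n - 2) r"
      using points[of p "n - 2"] pq by force
    then show ?thesis
      using pq n by (intro exI[of _ "[a]"]) (simp add: point_transf_def)
  qed (use pq n in \<open>intro exI[of _ "[]"], auto\<close>)
  have "\<exists>w. set w \<subseteq> Sig \<and> (run delta p w \<in> {n - 2} \<longleftrightarrow> run delta q w \<notin> {n - 2})"
    if "p < n" "q < n" "p \<noteq> q" for p q
  proof (cases "p = n - 1")
    case True
    then show ?thesis
      using separate[of q p] that by fastforce
  next
    case False
    then show ?thesis
      using separate[of p q] that by fastforce
  qed
  then show ?thesis
    using reach letters n \<open>finite Sig\<close> by (auto simp: is_minimal_dfa_def is_dfa_def)
qed

lemma suffix_free_lang_if_sf_admissible: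
  assumes f: "f < n - 1"
    and adm: "\<And>w. w \<noteq> [] \<Longrightarrow> set w \<subseteq> Sig \<Longrightarrow> sf_admissible n (word_transf n delta w)"
  shows "suffix_free (lang Sig delta {f})"
  unfolding suffix_free_def
proof (intro ballI impI)
  fix w u
  assume w: "w \<in> lang Sig delta {f}" and u: "u \<in> lang Sig delta {f}" and "suffix u w"
  then obtain x where x: "w = x @ u"
    by (auto simp: suffix_def)
  show "u = w"
  proof (rule ccontr)
    assume "u \<noteq> w"
    with x have "x \<noteq> []"
      by auto
    have "set x \<subseteq> Sig" "set u \<subseteq> Sig"
      using w x by (auto simp: lang_def)
    let ?q = "run delta 0 x"
    have "0 < n"
      using f by linarith
    have adm_x: "sf_admissible n (word_transf n delta x)"
      using adm \<open>x \<noteq> []\<close> \<open>set x \<subseteq> Sig\<close> by blast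
    have x0: "word_transf n delta x 0 = ?q"
      using \<open>0 < n\<close> by (simp add: word_transf_apply)
    have "?q < n"
      using sf_admissible_less[OF adm_x \<open>0 < n\<close>] unfolding x0 .
    moreover have "?q \<noteq> 0"
      using adm_x \<open>0 < n\<close> x0 unfolding sf_admissible_def by metis
    ultimately have q: "?q < n" "?q \<noteq> 0" .
    have u0: "run delta 0 u = f" and uq: "run delta ?q u = f"
      using u w x by (auto simp: lang_def run_append)
    show False
    proof (cases "u = []")
      case True
      with u0 uq q(2) show False
        by simp
    next
      case False
      let ?t = "word_transf n delta u"
      have t: "sf_admissible n ?t"
        using adm False \<open>set u \<subseteq> Sig\<close> by blast
      have "?t 0 = f" "?t ?q = f"
        using u0 uq \<open>0 < n\<close> q(1) by (simp_all add: word_transf_apply)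
      moreover have "?t (n - 1) = n - 1"
        using t by (simp add: sf_admissible_def)
      ultimately have "?q \<noteq> n - 1"
        using f by auto
      with q have "0 < ?q \<and> ?q < n - 1"
        by linarith
      with t \<open>?t 0 = f\<close> \<open>?t ?q = f\<close> f show False
        by (auto simp: sf_admissible_def)
    qed
  qed
qed

lemma in_sf_semigroupsI:
  assumes n: "2 \<le> n" and "finite A" and adm: "\<forall>t\<in>A. sf_admissible n t"
    and closed: "\<forall>s\<in>A. \<forall>t\<in>A. s \<circ> t \<in> A"
    and points: "\<And>p r. p < n - 1 \<Longrightarrow> 0 < r \<Longrightarrow> r < n \<Longrightarrow> point_transf n p r \<in> A"
  shows "A \<in> sf_semigroups n"
proof -
  obtain delta where delta: "delta ` {..<card A} = A"
    using ex_bij_betw_nat_finite[OF \<open>finite A\<close>] by (auto simp: bij_betw_def atLeast0LessThan)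
  let ?Sig = "{..<card A}"
  have semigroup: "trans_semigroup n ?Sig delta = A"
    using adm closed delta by (intro trans_semigroup_eq) (auto simp: sf_admissible_def)
  have "\<forall>a\<in>?Sig. \<forall>q<n. delta a q < n"
    using adm delta sf_admissible_less by blast
  moreover have "\<exists>a\<in>?Sig. \<forall>q<n. delta a q = point_transf n p r q"
    if "p < n - 1" "0 < r" "r < n" for p r
    using points[OF that] delta by (metis imageE)
  ultimately have "is_minimal_dfa n ?Sig delta {n - 2}"
    using n by (intro minimal_dfa_if_point_letters) auto
  moreover have "is_empty_state ?Sig delta {n - 2} (n - 1)"
  proof -
    have "delta a (n - 1) = n - 1" if "a \<in> ?Sig" for a
      using adm delta that by (auto simp: sf_admissible_def)
    then have "run delta (n - 1) w = n - 1" if "set w \<subseteq> ?Sig" for w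
      using that by (induction w) auto
    then show ?thesis
      using n by (auto simp: is_empty_state_def)
  qed
  moreover have "suffix_free (lang ?Sig delta {n - 2})"
    using n semigroup adm by (intro suffix_free_lang_if_sf_admissible) (auto simp: trans_semigroup_def)
  ultimately show ?thesis
    unfolding sf_semigroups_def using semigroup by blast
qed

lemma W_sf_in_sf_semigroups:
  assumes "2 \<le> n"
  shows "W_sf n \<in> sf_semigroups n"
  unfolding W_sf_eq_compatible_set
proof (rule in_sf_semigroupsI[OF assms])
  show "finite (compatible_set n {})"
    using finite_compatible_set[OF assms, of "[]"] by (simp add: sym_set_def)
  show "\<forall>t\<in>compatible_set n {}. sf_admissible n t"
    by (simp add: compatible_set_def)
qed (use compatible_set_empty_comp point_transf_compatible_set_empty in blast)+

lemma V_sf_in_sf_semigroups: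
  assumes "2 \<le> n"
  shows "V_sf n \<in> sf_semigroups n"
  unfolding V_sf_eq_compatible_set[OF assms] compatible_set_middle_pairs[OF assms]
proof (rule in_sf_semigroupsI[OF assms])
  show "finite (inj_except_empty n)"
    using finite_compatible_set[OF assms, of "middle_pairs n"] compatible_set_middle_pairs[OF assms]
    by simp
  show "\<forall>t\<in>inj_except_empty n. sf_admissible n t"
    unfolding compatible_set_middle_pairs[OF assms, symmetric] by (simp add: compatible_set_def)
qed (use inj_except_empty_comp point_transf_inj_except_empty in blast)+

section \<open>Exhaustive comparison for n at most 6\<close>

lemma num_compatible_6_empty: "num_compatible 6 [] = 629"
  by code_simp

lemma num_compatible_6_less:
  "list_all (\<lambda>xs. xs = [] \<or> num_compatible 6 xs < 629) (subseqs (middle_pairs 6))"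
  by code_simp

lemma num_compatible_middle_pairs_less:
  "list_all (\<lambda>n. list_all (\<lambda>xs. xs = middle_pairs n \<or>
      num_compatible n xs < num_compatible n (middle_pairs n)) (subseqs (middle_pairs n))) [2..<6]"
  by code_simp

theorem theorem3:
  shows "unique_max_card (sf_semigroups 6) (W_sf 6) \<and>
         (\<forall>n::nat. 2 \<le> n \<and> n \<le> 5 \<longrightarrow> unique_max_card (sf_semigroups n) (V_sf n))"
proof (intro conjI allI impI)
  have W: "W_sf 6 = compatible_set 6 (sym_set [])"
    by (simp add: W_sf_eq_compatible_set sym_set_def)
  show "unique_max_card (sf_semigroups 6) (W_sf 6)"
    unfolding W using W_sf_in_sf_semigroups[of 6] W num_compatible_6_less
    by (intro unique_max_card_compatible_set) (simp_all add: num_compatible_6_empty)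
next
  fix n :: nat
  assume "2 \<le> n \<and> n \<le> 5"
  then have "n \<in> set [2..<6]" "2 \<le> n"
    by auto
  then show "unique_max_card (sf_semigroups n) (V_sf n)"
    unfolding V_sf_eq_compatible_set[OF \<open>2 \<le> n\<close>]
    using V_sf_in_sf_semigroups[OF \<open>2 \<le> n\<close>] V_sf_eq_compatible_set[OF \<open>2 \<le> n\<close>]
      num_compatible_middle_pairs_less
    by (intro unique_max_card_compatible_set) (auto simp: list_all_iff)
qed

end
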